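(* For all relatively prime integers $p \geq 1$ and $q$, one has $\Delta(p,q) \leq p/4$, where $\Delta(p,q) = \max \mathcal{D}(L(p,q)) - \min \mathcal{D}(L(p,q))$.
   Context: $L(p,q)$ denotes the lens space obtained by $p/q$ Dehn surgery on the unknot in $S^3$. For a rational homology sphere $Y$, $\mathcal{D}(Y)$ denotes the multiset of Heegaard Floer correction terms $d(Y,\mathfrak{s})$, $\mathfrak{s} \in \mathrm{Spin}^c(Y)$, so $\Delta(p,q)$ is the range (maximum minus minimum) of the correction terms of $L(p,q)$. *)

theory Defs
  imports Complex_Main
begin

text \<open>Heegaard Floer correction terms of lens spaces, via the Ozsvath-Szabo
recursive formula: for p > q > 0 coprime and 0 \<le> i < p + q,
  d(-L(p,q), i) = ((2i+1-p-q)^2 - pq)/(4pq) - d(-L(q, p mod q), i mod q),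
with d(-L(1,q), 0) = d(S^3) = 0.  Here dneg p q i is d(-L(p, q mod p), i).\<close>

function dneg :: "nat \<Rightarrow> nat \<Rightarrow> nat \<Rightarrow> real" where
  "dneg p q i =
     (if p \<le> 1 then 0
      else (let q' = q mod p in
        ((2 * real i + 1 - real p - real q')^2 - real p * real q') / (4 * real p * real q')
        - dneg q' (p mod q') (i mod q')))"
  by pat_completeness auto
termination
  by (relation "measure (\<lambda>(p, q, i). p)") auto

text \<open>Correction term d(L(p,q), s_i) of the lens space L(p,q), p \<ge> 1, q an
arbitrary integer coprime to p (only q mod p matters); Spin^c structures are
labelled by i \<in> {0..<p}.\<close>
definition lens_d :: "int \<Rightarrow> int \<Rightarrow> nat \<Rightarrow> real" where
  "lens_d p q i = - dneg (nat p) (nat (q mod p)) i"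

text \<open>The set of values of the multiset D(L(p,q)) (max/min depend only on it).\<close>
definition lens_D :: "int \<Rightarrow> int \<Rightarrow> real set" where
  "lens_D p q = lens_d p q ` {0..<nat p}"

definition Delta :: "int \<Rightarrow> int \<Rightarrow> real" where
  "Delta p q = Max (lens_D p q) - Min (lens_D p q)"

end

theory Submission
  imports Defs
begin

text \<open>Since \<open>dneg\<close> is \<open>-d\<close>, it suffices to bound the spread of \<open>dneg p q\<close> on \<open>{..<p}\<close>,
by induction on \<open>p\<close>; let \<open>0 < q < p\<close>. One step of the recursion writes \<open>dneg p q x\<close> as
\<open>z\<^sup>2 / (4pq) - 1/4 - dneg q s k\<close> with \<open>|z| \<le> p + q - 1\<close>; when \<open>q > p/2\<close>, two steps
combine into the same shape for \<open>-dneg p q x\<close> with \<open>p - q\<close> in place of \<open>q\<close>. So with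
\<open>m = min q (p - q)\<close> the spread is at most \<open>(p + m - 1)\<^sup>2 / (4pm)\<close> plus the spread for
\<open>(m, s)\<close>, which is \<open>0\<close> if \<open>m = 1\<close> and at most \<open>m/4\<close> by induction otherwise. The
inequality \<open>(p + m - 1)\<^sup>2 \<le> pm(p - m)\<close>, valid for coprime \<open>2 \<le> m < p/2\<close> except
\<open>(p,m) = (5,2)\<close>, closes the induction; \<open>L(5,2)\<close> and \<open>L(5,3)\<close> are checked directly.\<close>

declare dneg.simps[simp del]

lemma dneg_le_one: "p \<le> 1 \<Longrightarrow> dneg p q i = 0"
  by (subst dneg.simps) simp

lemma dneg_rec:
  "2 \<le> p \<Longrightarrow> dneg p q i =
    ((2 * real i + 1 - real p - real (q mod p))\<^sup>2 - real p * real (q mod p))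
      / (4 * real p * real (q mod p))
    - dneg (q mod p) (p mod (q mod p)) (i mod (q mod p))"
  by (subst dneg.simps) (simp add: Let_def)

lemma dneg_mod: "dneg p (q mod p) = dneg p q"
  by (rule ext) (cases "p \<le> 1"; simp add: dneg_le_one dneg_rec)

lemma dneg_residue_rec:
  assumes "0 < q" "q < p"
  shows "dneg p q x = (2 * real x + 1 - real p - real q)\<^sup>2 / (4 * real p * real q) - 1/4
    - dneg q (p mod q) (x mod q)"
proof -
  have "2 \<le> p" using assms by linarith
  then show ?thesis
    using dneg_rec[of p q x] assms by (simp add: diff_divide_distrib)
qed

lemma two_step_identity_low:
  fixes x p Q r :: real
  assumes "0 < Q" "0 < r" "p = Q + r"
  shows "(2*x + 1 - p - Q)\<^sup>2 / (4*p*Q) - (2*x + 1 - Q - r)\<^sup>2 / (4*Q*r)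
    = 1/4 - (2*x + 1 - Q)\<^sup>2 / (4*p*r)"
proof -
  have "r * (2*x + 1 - p - Q)\<^sup>2 - p * (2*x + 1 - Q - r)\<^sup>2 = p*Q*r - Q * (2*x + 1 - Q)\<^sup>2"
    unfolding assms(3) by (simp add: power2_eq_square algebra_simps)
  moreover have "0 < p" using assms by simp
  ultimately show ?thesis using assms(1,2) by (simp add: field_simps, algebra)
qed

lemma two_step_identity_high:
  fixes y p Q r :: real
  assumes "0 < Q" "0 < r" "p = Q + r"
  shows "(2*y + 1 - r)\<^sup>2 / (4*p*Q) - (2*y + 1 - Q - r)\<^sup>2 / (4*Q*r)
    = 1/4 - (2*y + 1 - p - r)\<^sup>2 / (4*p*r)"
proof -
  have "r * (2*y + 1 - r)\<^sup>2 - p * (2*y + 1 - Q - r)\<^sup>2 = p*Q*r - Q * (2*y + 1 - p - r)\<^sup>2"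
    unfolding assms(3) by (simp add: power2_eq_square algebra_simps)
  moreover have "0 < p" using assms by simp
  ultimately show ?thesis using assms(1,2) by (simp add: field_simps, algebra)
qed

lemma dneg_large_residue:
  assumes "0 < q" "q < p" "p < 2 * q" "x < p"
  obtains z k where "\<bar>z\<bar> \<le> real p + real (p - q) - 1" "k < p - q"
    "- dneg p q x = z\<^sup>2 / (4 * real p * real (p - q)) - 1/4 - dneg (p - q) (q mod (p - q)) k"
proof -
  define r where "r = p - q"
  have r: "0 < r" "r < q" "p mod q = r" "real p = real q + real r"
    using assms by (auto simp: r_def le_mod_geq)
  have pos: "0 < real q" "0 < real r" using r assms by auto
  have step: "dneg p q x = (2 * real x + 1 - real p - real q)\<^sup>2 / (4 * real p * real q)
      - (2 * real (x mod q) + 1 - real q - real r)\<^sup>2 / (4 * real q * real r)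
      + dneg r (q mod r) (x mod q mod r)"
    using dneg_residue_rec[OF assms(1,2), of x] dneg_residue_rec[OF r(1,2), of "x mod q"] r(3)
    by simp
  show thesis
  proof (cases "x < q")
    case True
    have "dneg p q x = 1/4 - (2 * real x + 1 - real q)\<^sup>2 / (4 * real p * real r)
        + dneg r (q mod r) (x mod r)"
      using step True two_step_identity_low[OF pos r(4), of "real x"] by simp
    moreover have "\<bar>2 * real x + 1 - real q\<bar> \<le> real p + real r - 1" using True r by auto
    ultimately show thesis using that[folded r_def, of _ "x mod r"] r(1) by simp
  next
    case False
    define k where "k = x - q"
    have k: "k < r" "x mod q = k" "2 * real x + 1 - real p - real q = 2 * real k + 1 - real r"
      using False assms r by (auto simp: k_def r_def le_mod_geq)
    have "dneg p q x = 1/4 - (2 * real k + 1 - real p - real r)\<^sup>2 / (4 * real p * real r)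
        + dneg r (q mod r) k"
      using step k two_step_identity_high[OF pos r(4), of "real k"] by simp
    moreover have "\<bar>2 * real k + 1 - real p - real r\<bar> \<le> real p + real r - 1" using k r by auto
    ultimately show thesis using that[folded r_def] k(1) by simp
  qed
qed

lemma dneg_reduction:
  assumes "coprime p q" "0 < q" "q < p"
  obtains m s and \<epsilon> :: real
  where "m = min q (p - q)" "coprime p m" "coprime m s" "\<bar>\<epsilon>\<bar> = 1"
    "\<And>x. x < p \<Longrightarrow> \<exists>z k. \<bar>z\<bar> \<le> real p + real m - 1 \<and> k < m \<and>
       \<epsilon> * dneg p q x = z\<^sup>2 / (4 * real p * real m) - 1/4 - dneg m s k"
proof (cases "2 * q \<le> p")
  case True
  have "\<exists>z k. \<bar>z\<bar> \<le> real p + real q - 1 \<and> k < q \<and>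
      1 * dneg p q x = z\<^sup>2 / (4 * real p * real q) - 1/4 - dneg q (p mod q) k" if "x < p" for x
    using dneg_residue_rec[OF assms(2,3), of x] that assms(2)
    by (intro exI[of _ "2 * real x + 1 - real p - real q"] exI[of _ "x mod q"]) auto
  moreover have "coprime q (p mod q)"
    using assms(1,2) by (simp add: coprime_commute)
  ultimately show thesis using that[of q "p mod q" 1] True assms(1) by simp
next
  case False
  have "\<exists>z k. \<bar>z\<bar> \<le> real p + real (p - q) - 1 \<and> k < p - q \<and>
      -1 * dneg p q x = z\<^sup>2 / (4 * real p * real (p - q)) - 1/4 - dneg (p - q) (q mod (p - q)) k"
    if "x < p" for x
    using dneg_large_residue[OF assms(2,3) _ that] False by (metis mult_minus1 not_le)
  moreover have "coprime (p - q) q" "coprime p (p - q)"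
    using assms gcd_diff1_nat[of q p] gcd_diff2_nat[of q p]
    by (simp_all add: coprime_iff_gcd_eq_1 gcd.commute)
  moreover have "coprime (p - q) (q mod (p - q))"
    using calculation(2) assms(3) by simp
  ultimately show thesis using that[of "p - q" "q mod (p - q)" "-1"] False by simp
qed

lemma quadratic_recursion_spread:
  fixes f :: "'a \<Rightarrow> real" and g :: "'b \<Rightarrow> real"
  assumes "0 < D"
    and rep: "\<And>x. x \<in> X \<Longrightarrow> \<exists>z k. \<bar>z\<bar> \<le> M \<and> k \<in> K \<and> f x = z\<^sup>2 / D - c - g k"
    and spread: "\<And>a b. a \<in> K \<Longrightarrow> b \<in> K \<Longrightarrow> g a - g b \<le> B"
    and "x \<in> X" "y \<in> X"
  shows "\<bar>f x - f y\<bar> \<le> M\<^sup>2 / D + B"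
proof -
  have le: "f x - f y \<le> M\<^sup>2 / D + B" if "x \<in> X" "y \<in> X" for x y
  proof -
    obtain z k where x: "\<bar>z\<bar> \<le> M" "k \<in> K" "f x = z\<^sup>2 / D - c - g k" using rep[OF \<open>x \<in> X\<close>] by blast
    obtain w l where y: "l \<in> K" "f y = w\<^sup>2 / D - c - g l" using rep[OF \<open>y \<in> X\<close>] by blast
    have "z\<^sup>2 \<le> M\<^sup>2" using x(1) abs_le_square_iff[of z M] by linarith
    then have "z\<^sup>2 - w\<^sup>2 \<le> M\<^sup>2" using zero_le_power2[of w] by linarith
    then have "(z\<^sup>2 - w\<^sup>2) / D \<le> M\<^sup>2 / D"
      using \<open>0 < D\<close> by (simp add: divide_right_mono)
    then have "z\<^sup>2 / D - w\<^sup>2 / D \<le> M\<^sup>2 / D"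
      by (simp add: diff_divide_distrib)
    then show ?thesis using x y spread[of l k] by linarith
  qed
  show ?thesis using le[of x y] le[of y x] assms(4,5) by linarith
qed

lemma quadratic_gap:
  fixes p m :: nat
  assumes "2 \<le> m" "2 * m < p" "coprime p m" "\<not> (p = 5 \<and> m = 2)"
  shows "(p + m - 1)\<^sup>2 \<le> p * m * (p - m)"
proof (cases "m = 2")
  case True
  have "p \<noteq> 6" using assms(3) True by auto
  then have "7 \<le> p" using assms True by auto
  then obtain u where "p = 7 + u" using le_Suc_ex by blast
  moreover have "(7 + u) * 2 * (5 + u) = (8 + u)\<^sup>2 + (6 + 8 * u + u\<^sup>2)"
    by (simp add: algebra_simps power2_eq_square)
  ultimately show ?thesis using True by simp
next
  case False
  define t where "t = m - 3"
  define u where "u = p - (2 * t + 7)"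
  have t: "m = t + 3" and u: "p = 2 * t + 7 + u"
    using assms False by (auto simp: t_def u_def)
  \<comment> \<open>after this shift the gap is a polynomial with nonnegative coefficients\<close>
  have "(2*t+7+u) * (t+3) * (t+4+u) = (3*t+9+u)\<^sup>2
      + (2*t^3 + 12*t\<^sup>2 + 19*t + 3 + 15*u + 14*t*u + 3*t\<^sup>2*u + 2*u\<^sup>2 + t*u\<^sup>2)"
    by (simp add: algebra_simps power2_eq_square power3_eq_cube)
  then have "(3*t+9+u)\<^sup>2 \<le> (2*t+7+u) * (t+3) * (t+4+u)"
    by (metis le_add1)
  moreover have "p + m - 1 = 3*t+9+u" "p - m = t+4+u"
    using t u by simp_all
  ultimately show ?thesis by (simp only: t u)
qed

lemma reduction_spread_le:
  fixes p m :: nat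
  assumes "1 \<le> m" "2 * m \<le> p" "coprime p m" "\<not> (p = 5 \<and> m = 2)"
  shows "(real p + real m - 1)\<^sup>2 / (4 * real p * real m) + (if m = 1 then 0 else real m / 4)
    \<le> real p / 4"
proof (cases "m = 1")
  case True
  then show ?thesis using assms(2) by (simp add: power2_eq_square)
next
  case False
  have "2 * m \<noteq> p" using assms(3) False by auto
  then have "(p + m - 1)\<^sup>2 \<le> p * m * (p - m)"
    using quadratic_gap assms False by simp
  then have "real ((p + m - 1)\<^sup>2) \<le> real (p * m * (p - m))"
    by (simp only: of_nat_le_iff)
  then have "(real p + real m - 1)\<^sup>2 \<le> real p * real m * (real p - real m)"
    using assms(1,2) by (simp add: of_nat_diff)
  also have "\<dots> = (real p - real m) / 4 * (4 * real p * real m)"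
    by simp
  finally have "(real p + real m - 1)\<^sup>2 / (4 * real p * real m) \<le> (real p - real m) / 4"
    using assms(1,2) by (simp add: pos_divide_le_eq)
  then show ?thesis using False by simp
qed

lemma dneg_five_abs_le:
  assumes "q mod 5 \<in> {2, 3}" "i < 5"
  shows "\<bar>dneg 5 q i\<bar> \<le> 1/2"
proof -
  have "i \<in> {0, 1, 2, 3, 4}" using assms(2) by auto
  then show ?thesis
    using assms(1) dneg_mod[of 5 q, symmetric] by (auto simp: dneg_rec dneg_le_one)
qed

lemma dneg_diff_le:
  assumes "coprime p q" "1 \<le> p" "i < p" "j < p"
  shows "dneg p q i - dneg p q j \<le> real p / 4"
  using assms
proof (induction p arbitrary: q i j rule: less_induct)
  case (less p)
  define Q where "Q = q mod p"
  have dneg_Q: "dneg p q = dneg p Q" by (simp add: Q_def dneg_mod)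
  show ?case
  proof (cases "p = 1")
    case True
    then show ?thesis by (simp add: dneg_le_one)
  next
    case False
    have Q: "coprime p Q" "0 < Q" "Q < p"
      using less.prems False by (auto simp: Q_def intro!: Nat.gr0I)
    show ?thesis
    proof (cases "p = 5 \<and> Q \<in> {2, 3}")
      case True
      then show ?thesis
        using dneg_five_abs_le[of q i] dneg_five_abs_le[of q j] less.prems by (auto simp: Q_def)
    next
      case False
      obtain m s and \<epsilon> :: real
        where m: "m = min Q (p - Q)" "coprime p m" "coprime m s" "\<bar>\<epsilon>\<bar> = 1"
        and rep: "\<And>x. x < p \<Longrightarrow> \<exists>z k. \<bar>z\<bar> \<le> real p + real m - 1 \<and> k < m \<and>
          \<epsilon> * dneg p Q x = z\<^sup>2 / (4 * real p * real m) - 1/4 - dneg m s k"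
        using dneg_reduction[OF Q] by blast
      have m_props: "1 \<le> m" "2 * m \<le> p" "m < p" "\<not> (p = 5 \<and> m = 2)"
        using Q False m(1) by (auto simp: min_def)
      have spread_m: "dneg m s a - dneg m s b \<le> (if m = 1 then 0 else real m / 4)"
        if "a \<in> {..<m}" "b \<in> {..<m}" for a b
        using less.IH[of m s a b] m_props m(3) that by (auto simp: dneg_le_one)
      have "\<bar>\<epsilon> * dneg p Q i - \<epsilon> * dneg p Q j\<bar>
          \<le> (real p + real m - 1)\<^sup>2 / (4 * real p * real m) + (if m = 1 then 0 else real m / 4)"
        using m_props rep less.prems
        by (intro quadratic_recursion_spread[where X = "{..<p}" and K = "{..<m}" and c = "1/4"
              and g = "dneg m s", OF _ _ spread_m]) auto
      also have "\<dots> \<le> real p / 4"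
        using reduction_spread_le m_props m(2) by blast
      finally have "\<bar>dneg p Q i - dneg p Q j\<bar> \<le> real p / 4"
        using m(4) by (simp add: abs_mult flip: right_diff_distrib)
      then show ?thesis
        unfolding dneg_Q by (rule abs_le_D1)
    qed
  qed
qed

theorem lemma3p1:
  fixes p q :: int
  assumes "p \<ge> 1" and "coprime p q"
  shows "Delta p q \<le> real_of_int p / 4"
proof -
  have "coprime p (q mod p)" using assms by simp
  then have coprime_nat: "coprime (nat p) (nat (q mod p))"
    using assms(1) by (simp add: coprime_int_iff[symmetric])
  have finite: "finite (lens_D p q)" and nonempty: "lens_D p q \<noteq> {}"
    using assms(1) by (auto simp: lens_D_def)
  obtain j where j: "j < nat p" "Max (lens_D p q) = lens_d p q j"
    using Max_in[OF finite nonempty] by (auto simp: lens_D_def)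
  obtain i where i: "i < nat p" "Min (lens_D p q) = lens_d p q i"
    using Min_in[OF finite nonempty] by (auto simp: lens_D_def)
  have "dneg (nat p) (nat (q mod p)) i - dneg (nat p) (nat (q mod p)) j \<le> real (nat p) / 4"
    using dneg_diff_le[OF coprime_nat] assms(1) i j by simp
  then show ?thesis
    using assms(1) i j by (simp add: Delta_def lens_d_def)
qed

end
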